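(* Assume that $A_1,\dots,A_d$ are mutually independent, and that they are mutually independent conditionally on $\hat Y$, i.e. for every $y\in\mathcal Y$ and $a=(a_1,\dots,a_d)\in\mathcal A$, $p_{A\mid \hat Y}(a\mid y)=\prod_{k=1}^d p_{A_k\mid\hat Y}(a_k\mid y)$. Then $$u^*=\sup_{y\in\mathcal Y}\sum_{k=1}^d\ \sup_{(a_k,a_k')\in\mathcal A_k^2} u_k(y,a_k,a_k')\ \le\ \sum_{k=1}^d u_k^* .$$
   Context: Let $\hat Y=h(X)$ be the prediction of a fixed deterministic classifier, taking values in a finite set $\mathcal Y$, and let $A=(A_1,\dots,A_d)$ be a random vector of protected attributes, $A_k$ taking values in a finite set $\mathcal A_k$, $\mathcal A=\mathcal A_1\times\dots\times\mathcal A_d$. Write $p_V(v)=\Pr(V=v)$, $p_{V,W}(v,w)=\Pr(V=v,W=w)$ and $p_{V\mid W}(v\mid w)=\Pr(V=v\mid W=w)$. Assume $p_{A,\hat Y}(a,y)>0$ for all $(a,y)\in\mathcal A\times\mathcal Y$. For $y\in\mathcal Y$, $a,a'\in\mathcal A$, set $u(y,a,a')=\big|\log\big(p_{\hat Y\mid A}(y\mid a)/p_{\hat Y\mid A}(y\mid a')\big)\big|$ and the intersectional unfairness $u^*=\sup_{y\in\mathcal Y}\sup_{(a,a')\in\mathcal A^2}u(y,a,a')$. For each $k$ and $a_k,a_k'\in\mathcal A_k$, set $u_k(y,a_k,a_k')=\big|\log\big(p_{\hat Y\mid A_k}(y\mid a_k)/p_{\hat Y\mid A_k}(y\mid a_k')\big)\big|$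 and the marginal unfairness $u_k^*=\sup_{y\in\mathcal Y}\sup_{(a_k,a_k')\in\mathcal A_k^2}u_k(y,a_k,a_k')$. *)

theory Defs
  imports "HOL-Probability.Probability_Mass_Function"
begin

text \<open>Finite model: a pmf M on a sample space; Yh is the prediction \<open>\<hat>Y = h(X)\<close>,
  Ak k (k < d) are the protected attributes. All probabilities are taken w.r.t. M.\<close>

definition prb :: "'w pmf \<Rightarrow> ('w \<Rightarrow> bool) \<Rightarrow> real" where
  "prb M E = measure_pmf.prob M {w. E w}"

definition cprb :: "'w pmf \<Rightarrow> ('w \<Rightarrow> bool) \<Rightarrow> ('w \<Rightarrow> bool) \<Rightarrow> real" where
  "cprb M E F = prb M (\<lambda>w. E w \<and> F w) / prb M F"

definition evA :: "nat \<Rightarrow> (nat \<Rightarrow> 'w \<Rightarrow> 'a) \<Rightarrow> (nat \<Rightarrow> 'a) \<Rightarrow> 'w \<Rightarrow> bool" where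
  "evA d A a w = (\<forall>k<d. A k w = a k)"

definition u_int :: "'w pmf \<Rightarrow> nat \<Rightarrow> (nat \<Rightarrow> 'w \<Rightarrow> 'a) \<Rightarrow> ('w \<Rightarrow> 'y) \<Rightarrow> 'y \<Rightarrow> (nat \<Rightarrow> 'a) \<Rightarrow> (nat \<Rightarrow> 'a) \<Rightarrow> real" where
  "u_int M d A Yh y a a' =
     \<bar>ln (cprb M (\<lambda>w. Yh w = y) (evA d A a) / cprb M (\<lambda>w. Yh w = y) (evA d A a'))\<bar>"

definition u_star :: "'w pmf \<Rightarrow> nat \<Rightarrow> (nat \<Rightarrow> 'w \<Rightarrow> 'a) \<Rightarrow> (nat \<Rightarrow> 'a set) \<Rightarrow> ('w \<Rightarrow> 'y) \<Rightarrow> 'y set \<Rightarrow> real" where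
  "u_star M d A As Yh Ys =
     (SUP y\<in>Ys. SUP aa'\<in>(PiE {..<d} As \<times> PiE {..<d} As). u_int M d A Yh y (fst aa') (snd aa'))"

definition u_marg :: "'w pmf \<Rightarrow> (nat \<Rightarrow> 'w \<Rightarrow> 'a) \<Rightarrow> ('w \<Rightarrow> 'y) \<Rightarrow> nat \<Rightarrow> 'y \<Rightarrow> 'a \<Rightarrow> 'a \<Rightarrow> real" where
  "u_marg M A Yh k y b b' =
     \<bar>ln (cprb M (\<lambda>w. Yh w = y) (\<lambda>w. A k w = b) / cprb M (\<lambda>w. Yh w = y) (\<lambda>w. A k w = b'))\<bar>"

definition u_marg_star :: "'w pmf \<Rightarrow> (nat \<Rightarrow> 'w \<Rightarrow> 'a) \<Rightarrow> (nat \<Rightarrow> 'a set) \<Rightarrow> ('w \<Rightarrow> 'y) \<Rightarrow> 'y set \<Rightarrow> nat \<Rightarrow> real" where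
  "u_marg_star M A As Yh Ys k =
     (SUP y\<in>Ys. SUP bb'\<in>(As k \<times> As k). u_marg M A Yh k y (fst bb') (snd bb'))"

end

theory Submission
  imports Defs
begin

text \<open>By Bayes' rule, independence and conditional independence of the attributes give
  \<open>p(y | a) = p(y) \<Prod>\<^sub>k p(y | a\<^sub>k) / p(y)\<close>, so the intersectional log-ratio
  \<open>log (p(y | a) / p(y | a'))\<close> is the sum over \<open>k\<close> of the marginal log-ratios
  \<open>log (p(y | a\<^sub>k) / p(y | a'\<^sub>k))\<close>. Each marginal log-ratio is antisymmetric in
  \<open>(a\<^sub>k, a'\<^sub>k)\<close>, so maximisers of its absolute value can be chosen with a common sign,
  independently in each coordinate; hence the supremum of the absolute sum is the sum of the
  suprema. Exchanging the supremum over \<open>y\<close> with the sum gives the inequality.\<close>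

lemma prb_mono:
  assumes "\<And>w. E w \<Longrightarrow> F w"
  shows "prb M E \<le> prb M F"
  unfolding prb_def using assms by (intro measure_pmf.finite_measure_mono) auto

text \<open>No positivity hypotheses are needed: both sides vanish when \<open>prb M F = 0\<close>
  or \<open>prb M E = 0\<close>, since \<open>x / 0 = 0\<close>.\<close>

lemma cprb_bayes: "cprb M F E = cprb M E F * prb M F / prb M E"
proof (cases "prb M F = 0")
  case True
  have "prb M (\<lambda>w. F w \<and> E w) \<le> prb M F" by (rule prb_mono) simp
  moreover have "prb M (\<lambda>w. F w \<and> E w) \<ge> 0" by (simp add: prb_def)
  ultimately show ?thesis using True by (simp add: cprb_def)
next
  case False
  then show ?thesis by (simp add: cprb_def conj_commute)
qed

lemma cprb_given_conj_eq_prod: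
  fixes E :: "nat \<Rightarrow> 'w \<Rightarrow> bool"
  assumes indep: "prb M (\<lambda>w. \<forall>k<d. E k w) = (\<Prod>k<d. prb M (E k))"
    and cond_indep: "cprb M (\<lambda>w. \<forall>k<d. E k w) F = (\<Prod>k<d. cprb M (E k) F)"
    and nonzero: "\<And>k. k < d \<Longrightarrow> prb M (E k) \<noteq> 0"
  shows "cprb M F (\<lambda>w. \<forall>k<d. E k w) = prb M F * (\<Prod>k<d. cprb M F (E k) / prb M F)"
proof -
  have "cprb M F (\<lambda>w. \<forall>k<d. E k w) = prb M F * ((\<Prod>k<d. cprb M (E k) F) / (\<Prod>k<d. prb M (E k)))"
    by (subst cprb_bayes) (simp add: indep cond_indep)
  also have "\<dots> = prb M F * (\<Prod>k<d. cprb M (E k) F / prb M (E k))"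
    by (simp add: prod_dividef)
  also have "\<dots> = prb M F * (\<Prod>k<d. cprb M F (E k) / prb M F)"
    by (intro arg_cong[where f="(*) _"] prod.cong refl)
       (subst (2) cprb_bayes, use nonzero in \<open>auto simp: cprb_def\<close>)
  finally show ?thesis .
qed

lemma ln_ratio_of_scaled_prods:
  fixes f g :: "'i \<Rightarrow> real"
  assumes "q \<noteq> 0" "finite I" "\<And>i. i \<in> I \<Longrightarrow> f i > 0" "\<And>i. i \<in> I \<Longrightarrow> g i > 0"
  shows "ln (q * (\<Prod>i\<in>I. f i / q) / (q * (\<Prod>i\<in>I. g i / q))) = (\<Sum>i\<in>I. ln (f i / g i))"
proof -
  have "q * (\<Prod>i\<in>I. f i / q) / (q * (\<Prod>i\<in>I. g i / q)) = (\<Prod>i\<in>I. (f i / q) / (g i / q))"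
    using assms(1) by (simp add: prod_dividef)
  also have "\<dots> = (\<Prod>i\<in>I. f i / g i)"
    using assms(1) by (intro prod.cong refl) simp
  finally show ?thesis
    using assms(2-4) by (simp add: ln_prod less_imp_neq[symmetric])
qed

lemma antisym_attains_SUP_abs:
  fixes g :: "'a \<Rightarrow> 'a \<Rightarrow> real"
  assumes fin: "finite S" and ne: "S \<noteq> {}"
    and skew: "\<And>b b'. b \<in> S \<Longrightarrow> b' \<in> S \<Longrightarrow> g b' b = - g b b'"
  obtains b b' where "b \<in> S" "b' \<in> S" "g b b' = (SUP bb'\<in>S \<times> S. \<bar>g (fst bb') (snd bb')\<bar>)"
proof -
  let ?f = "\<lambda>bb'. \<bar>g (fst bb') (snd bb')\<bar>"
  have "(SUP bb'\<in>S \<times> S. ?f bb') = Max (?f ` (S \<times> S))"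
    using fin ne by (simp add: cSup_eq_Max)
  also have "\<dots> \<in> ?f ` (S \<times> S)"
    using fin ne by (intro Max_in) auto
  finally obtain b b' where bb': "b \<in> S" "b' \<in> S" "(SUP bb'\<in>S \<times> S. ?f bb') = \<bar>g b b'\<bar>"
    by auto
  show ?thesis
  proof (cases "g b b' \<ge> 0")
    case True
    then show ?thesis using bb' that[of b b'] by simp
  next
    case False
    then show ?thesis using bb' skew[OF bb'(1,2)] that[of b' b] by simp
  qed
qed

lemma antisym_attains_SUP_abs_PiE:
  fixes g :: "nat \<Rightarrow> 'a \<Rightarrow> 'a \<Rightarrow> real"
  assumes fin: "\<And>k. k < d \<Longrightarrow> finite (S k)" and ne: "\<And>k. k < d \<Longrightarrow> S k \<noteq> {}"
    and skew: "\<And>k b b'. k < d \<Longrightarrow> b \<in> S k \<Longrightarrow> b' \<in> S k \<Longrightarrow> g k b' b = - g k b b'"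
  obtains a a' where "a \<in> PiE {..<d} S" "a' \<in> PiE {..<d} S"
    "\<And>k. k < d \<Longrightarrow> g k (a k) (a' k) = (SUP bb'\<in>S k \<times> S k. \<bar>g k (fst bb') (snd bb')\<bar>)"
proof -
  let ?m = "\<lambda>k. SUP bb'\<in>S k \<times> S k. \<bar>g k (fst bb') (snd bb')\<bar>"
  have "\<forall>k\<in>{..<d}. \<exists>p. p \<in> S k \<times> S k \<and> g k (fst p) (snd p) = ?m k"
  proof
    fix k assume "k \<in> {..<d}"
    then have k: "k < d" by simp
    obtain b b' where "b \<in> S k" "b' \<in> S k" "g k b b' = ?m k"
      by (rule antisym_attains_SUP_abs[OF fin[OF k] ne[OF k] skew[OF k]])
    then show "\<exists>p. p \<in> S k \<times> S k \<and> g k (fst p) (snd p) = ?m k" by auto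
  qed
  then obtain p where "\<forall>k\<in>{..<d}. p k \<in> S k \<times> S k \<and> g k (fst (p k)) (snd (p k)) = ?m k"
    by (rule bchoice[THEN exE])
  then show ?thesis
    by (intro that[of "restrict (fst \<circ> p) {..<d}" "restrict (snd \<circ> p) {..<d}"])
       (auto simp: PiE_iff mem_Times_iff)
qed

lemma SUP_abs_sum_PiE:
  fixes g :: "nat \<Rightarrow> 'a \<Rightarrow> 'a \<Rightarrow> real"
  assumes fin: "\<And>k. k < d \<Longrightarrow> finite (S k)" and ne: "\<And>k. k < d \<Longrightarrow> S k \<noteq> {}"
    and skew: "\<And>k b b'. k < d \<Longrightarrow> b \<in> S k \<Longrightarrow> b' \<in> S k \<Longrightarrow> g k b' b = - g k b b'"
  shows "(SUP aa'\<in>PiE {..<d} S \<times> PiE {..<d} S. \<bar>\<Sum>k<d. g k (fst aa' k) (snd aa' k)\<bar>)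
       = (\<Sum>k<d. SUP bb'\<in>S k \<times> S k. \<bar>g k (fst bb') (snd bb')\<bar>)"
    (is "(SUP aa'\<in>?P. ?F aa') = (\<Sum>k<d. ?m k)")
proof -
  have upper: "\<bar>g k b b'\<bar> \<le> ?m k" if "k < d" "b \<in> S k" "b' \<in> S k" for k b b'
    by (rule cSUP_upper2[where x="(b, b')"]) (use that fin in \<open>auto intro!: bdd_above_finite\<close>)
  obtain a a' where a: "a \<in> PiE {..<d} S" and a': "a' \<in> PiE {..<d} S"
    and attained: "\<And>k. k < d \<Longrightarrow> g k (a k) (a' k) = ?m k"
  proof (rule antisym_attains_SUP_abs_PiE[OF fin ne skew])
    fix a a'
    assume "a \<in> PiE {..<d} S" "a' \<in> PiE {..<d} S" "\<And>k. k < d \<Longrightarrow> g k (a k) (a' k) = ?m k"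
    then show thesis by (rule that)
  qed
  have m_nonneg: "?m k \<ge> 0" if "k < d" for k
    using upper[OF that, of "a k" "a' k"] attained[OF that] a a' that by (auto simp: PiE_iff)
  show ?thesis
  proof (rule order_antisym)
    show "(SUP aa'\<in>?P. ?F aa') \<le> (\<Sum>k<d. ?m k)"
    proof (rule cSUP_least)
      show "?P \<noteq> {}" using a a' by blast
    next
      fix x assume "x \<in> ?P"
      then have "fst x k \<in> S k" "snd x k \<in> S k" if "k < d" for k
        using that by (auto simp: mem_Times_iff PiE_iff)
      then have "(\<Sum>k<d. \<bar>g k (fst x k) (snd x k)\<bar>) \<le> (\<Sum>k<d. ?m k)"
        by (intro sum_mono upper) auto
      then show "?F x \<le> (\<Sum>k<d. ?m k)"
        by (rule order_trans[OF sum_abs])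
    qed
    have "finite ?P" using fin by (auto intro!: finite_PiE)
    moreover have "?F (a, a') = (\<Sum>k<d. ?m k)"
      using attained sum_nonneg[of "{..<d}" ?m] m_nonneg by simp
    ultimately show "(\<Sum>k<d. ?m k) \<le> (SUP aa'\<in>?P. ?F aa')"
      using a a' by (intro cSUP_upper2[where x="(a, a')"]) (auto intro!: bdd_above_finite)
  qed
qed

lemma SUP_sum_le_sum_SUP:
  fixes f :: "'k \<Rightarrow> 'y \<Rightarrow> real"
  assumes "finite Y" "Y \<noteq> {}"
  shows "(SUP y\<in>Y. \<Sum>k\<in>K. f k y) \<le> (\<Sum>k\<in>K. SUP y\<in>Y. f k y)"
  using assms by (intro cSUP_least sum_mono cSUP_upper) (auto intro: bdd_above_finite)

locale fairness_model =
  fixes M :: "'w pmf" and d :: nat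
    and A :: "nat \<Rightarrow> 'w \<Rightarrow> 'a" and As :: "nat \<Rightarrow> 'a set"
    and Yh :: "'w \<Rightarrow> 'y" and Ys :: "'y set"
  assumes finAs: "\<And>k. k < d \<Longrightarrow> finite (As k)"
    and rangeA: "\<And>k w. k < d \<Longrightarrow> w \<in> set_pmf M \<Longrightarrow> A k w \<in> As k"
    and rangeY: "\<And>w. w \<in> set_pmf M \<Longrightarrow> Yh w \<in> Ys"
    and pos: "\<And>a y. a \<in> PiE {..<d} As \<Longrightarrow> y \<in> Ys \<Longrightarrow>
                prb M (\<lambda>w. evA d A a w \<and> Yh w = y) > 0"
    and indep: "\<And>a. a \<in> PiE {..<d} As \<Longrightarrow>
                prb M (evA d A a) = (\<Prod>k<d. prb M (\<lambda>w. A k w = a k))"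
    and cond_indep: "\<And>a y. a \<in> PiE {..<d} As \<Longrightarrow> y \<in> Ys \<Longrightarrow>
                cprb M (evA d A a) (\<lambda>w. Yh w = y)
                  = (\<Prod>k<d. cprb M (\<lambda>w. A k w = a k) (\<lambda>w. Yh w = y))"
begin

lemma Ys_nonempty: "Ys \<noteq> {}"
  using rangeY[of "SOME w. w \<in> set_pmf M"] some_in_eq[of "set_pmf M"] set_pmf_not_empty[of M] by auto

lemma As_nonempty: "k < d \<Longrightarrow> As k \<noteq> {}"
  using rangeA[of k "SOME w. w \<in> set_pmf M"] some_in_eq[of "set_pmf M"] set_pmf_not_empty[of M] by auto

lemma PiE_As_nonempty: "PiE {..<d} As \<noteq> {}"
  using As_nonempty by (simp add: PiE_eq_empty_iff)

lemma ex_PiE_value: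
  assumes "k < d" "b \<in> As k"
  obtains a where "a \<in> PiE {..<d} As" "a k = b"
proof -
  obtain a0 where "a0 \<in> PiE {..<d} As"
    using PiE_As_nonempty by blast
  then have "a0(k := b) \<in> PiE {..<d} As"
    using PiE_fun_upd[of b As k a0 "{..<d}"] assms by (simp add: insert_absorb)
  then show ?thesis using that by simp
qed

lemma prb_A_Yh_pos:
  assumes "k < d" "b \<in> As k" "y \<in> Ys"
  shows "prb M (\<lambda>w. A k w = b \<and> Yh w = y) > 0"
proof -
  obtain a where a: "a \<in> PiE {..<d} As" "a k = b"
    using ex_PiE_value assms(1,2) .
  have "0 < prb M (\<lambda>w. evA d A a w \<and> Yh w = y)"
    using pos a(1) assms(3) .
  also have "\<dots> \<le> prb M (\<lambda>w. A k w = b \<and> Yh w = y)"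
    using a assms(1) by (intro prb_mono) (auto simp: evA_def)
  finally show ?thesis .
qed

lemma prb_A_pos:
  assumes "k < d" "b \<in> As k" "y \<in> Ys"
  shows "prb M (\<lambda>w. A k w = b) > 0"
  by (rule less_le_trans[OF prb_A_Yh_pos[OF assms]]) (rule prb_mono, simp)

lemma prb_Yh_pos:
  assumes "y \<in> Ys"
  shows "prb M (\<lambda>w. Yh w = y) > 0"
proof -
  obtain a where "a \<in> PiE {..<d} As"
    using PiE_As_nonempty by blast
  show ?thesis
    by (rule less_le_trans[OF pos[OF \<open>a \<in> PiE {..<d} As\<close> assms]]) (rule prb_mono, simp)
qed

lemma cprb_Yh_A_pos:
  assumes "k < d" "b \<in> As k" "y \<in> Ys"
  shows "cprb M (\<lambda>w. Yh w = y) (\<lambda>w. A k w = b) > 0"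
  using prb_A_Yh_pos[OF assms] prb_A_pos[OF assms] by (simp add: cprb_def conj_commute)

definition marg_log_ratio :: "'y \<Rightarrow> nat \<Rightarrow> 'a \<Rightarrow> 'a \<Rightarrow> real" where
  "marg_log_ratio y k b b' =
     ln (cprb M (\<lambda>w. Yh w = y) (\<lambda>w. A k w = b) / cprb M (\<lambda>w. Yh w = y) (\<lambda>w. A k w = b'))"

lemma u_marg_eq_abs_marg_log_ratio: "u_marg M A Yh k y b b' = \<bar>marg_log_ratio y k b b'\<bar>"
  unfolding u_marg_def marg_log_ratio_def ..

lemma marg_log_ratio_swap:
  "k < d \<Longrightarrow> b \<in> As k \<Longrightarrow> b' \<in> As k \<Longrightarrow> y \<in> Ys \<Longrightarrow>
    marg_log_ratio y k b' b = - marg_log_ratio y k b b'"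
  using cprb_Yh_A_pos[of k b y] cprb_Yh_A_pos[of k b' y]
  by (simp add: marg_log_ratio_def ln_div)

lemma u_int_eq_abs_sum_marg_log_ratio:
  assumes a: "a \<in> PiE {..<d} As" and a': "a' \<in> PiE {..<d} As" and y: "y \<in> Ys"
  shows "u_int M d A Yh y a a' = \<bar>\<Sum>k<d. marg_log_ratio y k (a k) (a' k)\<bar>"
proof -
  have factor: "cprb M (\<lambda>w. Yh w = y) (evA d A x)
      = prb M (\<lambda>w. Yh w = y) * (\<Prod>k<d. cprb M (\<lambda>w. Yh w = y) (\<lambda>w. A k w = x k) / prb M (\<lambda>w. Yh w = y))"
    if x: "x \<in> PiE {..<d} As" for x
  proof -
    have ev: "evA d A x = (\<lambda>w. \<forall>k<d. A k w = x k)"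
      by (simp add: evA_def[abs_def])
    have "prb M (\<lambda>w. A k w = x k) \<noteq> 0" if "k < d" for k
      using prb_A_pos[OF that _ y, of "x k"] x that by (simp add: PiE_iff)
    then show ?thesis
      unfolding ev
      by (rule cprb_given_conj_eq_prod[OF indep[OF x, unfolded ev] cond_indep[OF x y, unfolded ev]])
  qed
  show ?thesis
    unfolding u_int_def marg_log_ratio_def factor[OF a] factor[OF a']
    using prb_Yh_pos[OF y] cprb_Yh_A_pos[OF _ _ y] a a'
    by (subst ln_ratio_of_scaled_prods) (auto simp: PiE_iff)
qed

lemma SUP_u_int_eq_sum_SUP_u_marg:
  assumes y: "y \<in> Ys"
  shows "(SUP aa'\<in>PiE {..<d} As \<times> PiE {..<d} As. u_int M d A Yh y (fst aa') (snd aa'))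
       = (\<Sum>k<d. SUP bb'\<in>As k \<times> As k. u_marg M A Yh k y (fst bb') (snd bb'))"
proof -
  have "(SUP aa'\<in>PiE {..<d} As \<times> PiE {..<d} As. u_int M d A Yh y (fst aa') (snd aa'))
      = (SUP aa'\<in>PiE {..<d} As \<times> PiE {..<d} As.
           \<bar>\<Sum>k<d. marg_log_ratio y k (fst aa' k) (snd aa' k)\<bar>)"
    using u_int_eq_abs_sum_marg_log_ratio[OF _ _ y] by (intro SUP_cong) (auto simp: mem_Times_iff)
  also have "\<dots> = (\<Sum>k<d. SUP bb'\<in>As k \<times> As k. \<bar>marg_log_ratio y k (fst bb') (snd bb')\<bar>)"
    using finAs As_nonempty marg_log_ratio_swap[OF _ _ _ y] by (rule SUP_abs_sum_PiE)
  finally show ?thesis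
    by (simp add: u_marg_eq_abs_marg_log_ratio)
qed

end

theorem theorem1:
  fixes M :: "'w pmf" and d :: nat
    and A :: "nat \<Rightarrow> 'w \<Rightarrow> 'a" and As :: "nat \<Rightarrow> 'a set"
    and Yh :: "'w \<Rightarrow> 'y" and Ys :: "'y set"
  assumes finAs: "\<And>k. k < d \<Longrightarrow> finite (As k)"
    and finYs: "finite Ys"
    and rangeA: "\<And>k w. k < d \<Longrightarrow> w \<in> set_pmf M \<Longrightarrow> A k w \<in> As k"
    and rangeY: "\<And>w. w \<in> set_pmf M \<Longrightarrow> Yh w \<in> Ys"
    and pos: "\<And>a y. a \<in> PiE {..<d} As \<Longrightarrow> y \<in> Ys \<Longrightarrow>
                prb M (\<lambda>w. evA d A a w \<and> Yh w = y) > 0"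
    and indep: "\<And>a. a \<in> PiE {..<d} As \<Longrightarrow>
                prb M (evA d A a) = (\<Prod>k<d. prb M (\<lambda>w. A k w = a k))"
    and cond_indep: "\<And>a y. a \<in> PiE {..<d} As \<Longrightarrow> y \<in> Ys \<Longrightarrow>
                cprb M (evA d A a) (\<lambda>w. Yh w = y)
                  = (\<Prod>k<d. cprb M (\<lambda>w. A k w = a k) (\<lambda>w. Yh w = y))"
  shows "u_star M d A As Yh Ys
           = (SUP y\<in>Ys. \<Sum>k<d. SUP bb'\<in>(As k \<times> As k). u_marg M A Yh k y (fst bb') (snd bb'))
         \<and> (SUP y\<in>Ys. \<Sum>k<d. SUP bb'\<in>(As k \<times> As k). u_marg M A Yh k y (fst bb') (snd bb'))
           \<le> (\<Sum>k<d. u_marg_star M A As Yh Ys k)"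
proof -
  interpret fairness_model M d A As Yh Ys
    using finAs rangeA rangeY pos indep cond_indep by unfold_locales
  have "u_star M d A As Yh Ys
      = (SUP y\<in>Ys. \<Sum>k<d. SUP bb'\<in>(As k \<times> As k). u_marg M A Yh k y (fst bb') (snd bb'))"
    unfolding u_star_def using SUP_u_int_eq_sum_SUP_u_marg by (rule SUP_cong[OF refl])
  moreover have "(SUP y\<in>Ys. \<Sum>k<d. SUP bb'\<in>(As k \<times> As k). u_marg M A Yh k y (fst bb') (snd bb'))
      \<le> (\<Sum>k<d. u_marg_star M A As Yh Ys k)"
    unfolding u_marg_star_def using finYs Ys_nonempty by (rule SUP_sum_le_sum_SUP)
  ultimately show ?thesis by simp
qed

end
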